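(* Assume $$\lim_{h\to0}\frac{C_1\kappa\,h^{-1/2}}{\big(\Delta^{-1}(C_1h^{-1/2})\big)^2}=\infty .$$ Then there are constants $C_1,C_2>0$, depending on the perturbation $H$ and on $\kappa$ but not on $t$ or $h$, such that for all sufficiently small $h$, all $t\in(0,t_0)$ and all distinct $m,m'\in\mathbb Z^d$ with $I_m,I_{m'}\in D$, $m\in\mathcal M_h(t)$ and $|I_m-I_{m'}|\le h\,\Delta^{-1}(C_1h^{-1/2})$, one has $$|\mu_m-\mu_{m'}|\ge C_2h^{3/2}.$$
   Context: Setting: $D\subset\mathbb R^d$ a bounded convex domain of actions; $K^0(I;t,h)=\sum_{0\le j}K_j(I;t)h^j$ is the real-valued integrable part of the quantum Birkhoff normal form of $P_h(t)$, with $K_j$ smooth with derivatives bounded uniformly in $t\in(0,t_0)$, and $K_0(I;t)$ is the integrable part of the Birkhoff normal form of the classical Hamiltonian. $\Delta$ is a $\sigma$-approximation function (continuous, strictly increasing, unbounded, $\log\Delta(s)/s^{1/\sigma}\searrow0$, $\int_\varsigma^\infty\log\Delta(s)s^{-1-1/\sigma}ds<\infty$), $\Delta^{-1}$ its inverse. $E_\kappa(t)\subset D$ is the set of actions $I$ with $\omega=\nabla_IK_0(I;t)$ satisfying $|\langle\omega,k\rangle|\ge\kappa/\Delta(|k|)$ for all $k\in\mathbb Z^d\setminus\{0\}$. $I_m=h(m+\vartheta/4)$ for $m\in\mathbb Z^d$, $\vartheta$ the Maslov class of the tori; $\mathcal M_h(t)=\{m\in\mathbb Z^d:\operatorname{dist}(E_\kappa(t),h(m+\vartheta/4))\le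 Lh\}$ for a fixed $L>0$; quasi-eigenvalues $\mu_m=\mu_m(t;h)=K^0(I_m;t,h)$. *)

theory Defs
  imports "HOL-Analysis.Analysis"
begin

definition sigma_approx :: "real \<Rightarrow> (real \<Rightarrow> real) \<Rightarrow> bool" where
  "sigma_approx \<sigma> \<Delta> \<longleftrightarrow>
     \<sigma> > 0 \<and> continuous_on {0..} \<Delta> \<and> strict_mono_on {0..} \<Delta> \<and>
     (\<forall>s\<ge>0. \<Delta> s > 0) \<and> filterlim \<Delta> at_top at_top \<and>
     (\<exists>vs>0. antimono_on {vs..} (\<lambda>s. ln (\<Delta> s) / s powr (1/\<sigma>)) \<and>
        ((\<lambda>s. ln (\<Delta> s) / s powr (1/\<sigma>)) \<longlongrightarrow> 0) at_top \<and>
        (\<lambda>s. ln (\<Delta> s) * s powr (-1 - 1/\<sigma>)) integrable_on {vs..})"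

definition approx_inv :: "(real \<Rightarrow> real) \<Rightarrow> real \<Rightarrow> real" where
  "approx_inv \<Delta> y = inv_into {0..} \<Delta> y"

definition rvec :: "int^'n \<Rightarrow> real^'n" where
  "rvec k = (\<chi> i. real_of_int (k $ i))"

definition nonres_set :: "(real^'n \<Rightarrow> real^'n) \<Rightarrow> (real \<Rightarrow> real) \<Rightarrow> real \<Rightarrow> (real^'n) set \<Rightarrow> (real^'n) set" where
  "nonres_set \<omega> \<Delta> \<kappa> D =
     {I \<in> D. \<forall>k::int^'n. k \<noteq> 0 \<longrightarrow> \<bar>\<omega> I \<bullet> rvec k\<bar> \<ge> \<kappa> / \<Delta> (norm (rvec k))}"

definition quant_act :: "real \<Rightarrow> int^'n \<Rightarrow> int^'n \<Rightarrow> real^'n" where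
  "quant_act h \<theta> m = h *\<^sub>R (\<chi> i. real_of_int (m $ i) + real_of_int (\<theta> $ i) / 4)"

text \<open>M_h(t) = {m. dist(E, I_m) \<le> L h}; empty if E is empty (dist = +inf).\<close>
definition Mset :: "(real^'n) set \<Rightarrow> real \<Rightarrow> real \<Rightarrow> int^'n \<Rightarrow> (int^'n) set" where
  "Mset E L h \<theta> = {m. E \<noteq> {} \<and> infdist (quant_act h \<theta> m) E \<le> L * h}"

end

theory Submission
  imports Defs "HOL-Real_Asymp.Real_Asymp"
begin

text \<open>Two quasi-eigenvalues mu_m = K_0(I_m) + h K_1(I_m) + O(h^2) differ, to first order,
  by grad K_0(I) . (I_m - I_m'), where I is a nonresonant torus within distance O(h) of I_m.
  Since I_m - I_m' = h k with k a nonzero integer vector of length at most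
  A = Delta^-1(h^(-1/2)), the Diophantine condition bounds this term below by
  h kappa / Delta(A) = kappa h^(3/2). The Taylor remainder, the change of base point and the
  h K_1 and O(h^2) terms are all O(h^2 A^2), which the hypothesis on Delta^-1 makes
  negligible against kappa h^(3/2).\<close>

lemma infdist_less_obtain:
  fixes x :: "'a::metric_space"
  assumes "A \<noteq> {}" "infdist x A < r"
  obtains a where "a \<in> A" "dist x a < r"
proof -
  have "bdd_below ((\<lambda>a. dist x a) ` A)" by (rule bdd_belowI[of _ 0]) auto
  with assms have "\<exists>a\<in>A. dist x a < r" by (simp add: infdist_notempty cINF_less_iff)
  with that show ?thesis by blast
qed

lemma onorm_inner_le: "onorm (\<lambda>v. w \<bullet> v) \<le> norm (w::'a::real_inner)"
  by (rule onorm_bound) (simp_all, metis Cauchy_Schwarz_ineq2 mult.commute real_norm_def)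

lemma linearization_error_le:
  fixes f :: "'a::real_inner \<Rightarrow> real"
  assumes deriv: "\<And>x. x \<in> closed_segment a b \<Longrightarrow> (f has_derivative (\<lambda>v. g x \<bullet> v)) (at x)"
    and bound: "\<And>x. x \<in> closed_segment a b \<Longrightarrow> norm (g x - c) \<le> B"
  shows "\<bar>f a - f b - c \<bullet> (a - b)\<bar> \<le> B * norm (a - b)"
proof -
  have "((\<lambda>x. f x - c \<bullet> x) has_derivative (\<lambda>v. (g x - c) \<bullet> v)) (at x within closed_segment a b)"
    if "x \<in> closed_segment a b" for x
    unfolding inner_diff_left
    by (rule has_derivative_at_withinI)
      (intro has_derivative_diff deriv[OF that] has_derivative_inner_right has_derivative_ident)
  moreover have "onorm (\<lambda>v. (g x - c) \<bullet> v) \<le> B" if "x \<in> closed_segment a b" for x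
    using onorm_inner_le bound[OF that] by (rule order_trans)
  ultimately have "norm ((f a - c \<bullet> a) - (f b - c \<bullet> b)) \<le> B * norm (a - b)"
    by (intro differentiable_bound[OF convex_closed_segment]) auto
  then show ?thesis
    by (simp add: inner_diff_right algebra_simps)
qed

lemma two_term_difference_ge:
  fixes F f0 f1 :: "'a::real_inner \<Rightarrow> real" and g0 g1 :: "'a \<Rightarrow> 'a"
  assumes D: "convex D" "a \<in> D" "b \<in> D" "I \<in> D"
    and deriv0: "\<And>x. x \<in> D \<Longrightarrow> (f0 has_derivative (\<lambda>v. g0 x \<bullet> v)) (at x)"
    and lip0: "\<And>x. x \<in> D \<Longrightarrow> norm (g0 x - g0 I) \<le> B0 * dist x I"
    and deriv1: "\<And>x. x \<in> D \<Longrightarrow> (f1 has_derivative (\<lambda>v. g1 x \<bullet> v)) (at x)"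
    and bound1: "\<And>x. x \<in> D \<Longrightarrow> norm (g1 x) \<le> B1"
    and approx: "\<And>x. x \<in> D \<Longrightarrow> \<bar>F x - (f0 x + h * f1 x)\<bar> \<le> C * h\<^sup>2"
    and "0 \<le> h" "0 \<le> B0"
  shows "\<bar>g0 I \<bullet> (a - b)\<bar> - B0 * (norm (a - b) + dist a I) * norm (a - b)
           - h * B1 * norm (a - b) - 2 * C * h\<^sup>2 \<le> \<bar>F a - F b\<bar>"
proof -
  have seg: "closed_segment a b \<subseteq> D" using closed_segment_subset[OF D(2,3,1)] .
  have "norm (g0 x - g0 I) \<le> B0 * (norm (a - b) + dist a I)" if "x \<in> closed_segment a b" for x
  proof -
    have "dist x I \<le> norm (a - b) + dist a I"
      using dist_triangle[of x I a] segment_bound(1)[OF that]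
      by (simp add: dist_norm norm_minus_commute)
    then show ?thesis
      using lip0[of x] seg that \<open>0 \<le> B0\<close> by (meson mult_left_mono order_trans subsetD)
  qed
  then have lin0: "\<bar>f0 a - f0 b - g0 I \<bullet> (a - b)\<bar> \<le> B0 * (norm (a - b) + dist a I) * norm (a - b)"
    using deriv0 seg by (intro linearization_error_le) auto
  have "\<bar>f1 a - f1 b - 0 \<bullet> (a - b)\<bar> \<le> B1 * norm (a - b)"
    using deriv1 bound1 seg by (intro linearization_error_le) auto
  from mult_left_mono[OF this \<open>0 \<le> h\<close>]
  have "\<bar>h * (f1 a - f1 b)\<bar> \<le> h * B1 * norm (a - b)"
    using \<open>0 \<le> h\<close> by (simp add: abs_mult)
  moreover have "F a - F b = (f0 a - f0 b - g0 I \<bullet> (a - b)) + g0 I \<bullet> (a - b) + h * (f1 a - f1 b)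
      + (F a - (f0 a + h * f1 a)) - (F b - (f0 b + h * f1 b))"
    by (simp add: algebra_simps)
  ultimately show ?thesis using lin0 approx[OF D(2)] approx[OF D(3)] by linarith
qed

lemma expansion_error_le_quadratic:
  fixes h e d B0 B1 C L :: real
  assumes "0 \<le> h" "h \<le> e" "d \<le> (L + 1) * h" "0 \<le> L" "0 \<le> B0" "0 \<le> B1" "0 \<le> C"
  shows "B0 * (e + d) * e + h * B1 * e + 2 * C * h\<^sup>2 \<le> (B0 * (2 + L) + B1 + 2 * C) * e\<^sup>2"
proof -
  have "(L + 1) * h \<le> (L + 1) * e" using assms by (intro mult_left_mono) auto
  then have "e + d \<le> (2 + L) * e" using assms by (simp add: algebra_simps)
  from mult_left_mono[OF this, of "B0 * e"]
  have "B0 * (e + d) * e \<le> B0 * (2 + L) * e\<^sup>2"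
    using assms by (simp add: power2_eq_square algebra_simps)
  moreover have "h * B1 * e \<le> B1 * e\<^sup>2"
    using mult_left_mono[of h e "B1 * e"] assms by (simp add: power2_eq_square algebra_simps)
  moreover have "2 * C * h\<^sup>2 \<le> 2 * C * e\<^sup>2"
    using assms by (intro mult_left_mono power_mono) auto
  ultimately show ?thesis by (simp add: algebra_simps)
qed

lemma powr_three_halves:
  fixes h :: real
  assumes "h > 0"
  shows "h / h powr (-1/2) = h powr (3/2)" "h\<^sup>2 * h powr (-1/2) = h powr (3/2)"
proof -
  show "h / h powr (-1/2) = h powr (3/2)"
    using assms powr_diff[of h 1 "-1/2"] by simp
  show "h\<^sup>2 * h powr (-1/2) = h powr (3/2)"
    using assms by (simp add: powr_add[symmetric] flip: powr_numeral)
qed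

lemma sigma_approx_approx_inv:
  assumes "sigma_approx \<sigma> \<Delta>" "y \<ge> \<Delta> 0"
  shows "\<Delta> (approx_inv \<Delta> y) = y"
proof -
  from assms(1) have cont: "continuous_on {0..} \<Delta>" and lim: "filterlim \<Delta> at_top at_top"
    by (auto simp: sigma_approx_def)
  have "\<forall>\<^sub>F s in at_top. \<Delta> s \<ge> y \<and> s \<ge> 0"
    using lim by (auto simp: filterlim_at_top intro: eventually_conj eventually_ge_at_top)
  then obtain b where b: "\<Delta> b \<ge> y" "b \<ge> 0"
    using eventually_happens' trivial_limit_at_top_linorder by blast
  have "continuous_on {0..b} \<Delta>" using cont by (rule continuous_on_subset) auto
  with IVT'[OF assms(2) b] have y: "y \<in> \<Delta> ` {0..}" by fastforce
  then show ?thesis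
    unfolding approx_inv_def by (rule f_inv_into_f)
qed

lemma norm_rvec_ge_1:
  assumes "k \<noteq> 0"
  shows "1 \<le> norm (rvec k)"
proof -
  from assms obtain i where "k $ i \<noteq> 0" by (auto simp: vec_eq_iff)
  then have "1 \<le> \<bar>rvec k $ i\<bar>" by (simp add: rvec_def)
  also have "\<dots> \<le> norm (rvec k)" by (rule component_le_norm_cart)
  finally show ?thesis .
qed

lemma quant_act_diff: "quant_act h \<theta> m - quant_act h \<theta> m' = h *\<^sub>R rvec (m - m')"
  by (simp add: quant_act_def rvec_def vec_eq_iff algebra_simps)

lemma Mset_obtain_near:
  assumes "m \<in> Mset E L h \<theta>" "L * h < r"
  obtains I where "I \<in> E" "dist (quant_act h \<theta> m) I < r"
proof -
  from assms have "E \<noteq> {}" "infdist (quant_act h \<theta> m) E < r" by (auto simp: Mset_def)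
  with infdist_less_obtain that show ?thesis by blast
qed

lemma nonres_set_inner_ge:
  assumes "I \<in> nonres_set \<omega> \<Delta> \<kappa> D" "sigma_approx \<sigma> \<Delta>" "k \<noteq> 0" "norm (rvec k) \<le> A" "\<kappa> \<ge> 0"
  shows "\<kappa> / \<Delta> A \<le> \<bar>\<omega> I \<bullet> rvec k\<bar>"
proof -
  have "0 < \<Delta> (norm (rvec k))" and "\<Delta> (norm (rvec k)) \<le> \<Delta> A"
    using assms(2,4) order_trans[OF norm_ge_zero assms(4)]
    by (auto simp: sigma_approx_def intro!: strict_mono_on_leD[of "{0..}" \<Delta>])
  then have "\<kappa> / \<Delta> A \<le> \<kappa> / \<Delta> (norm (rvec k))"
    using assms(5) by (intro divide_left_mono) auto
  also have "\<dots> \<le> \<bar>\<omega> I \<bullet> rvec k\<bar>"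
    using assms(1,3) by (simp add: nonres_set_def)
  finally show ?thesis .
qed

lemma quant_act_diff_norm_ge:
  assumes "m \<noteq> m'" "0 \<le> h"
  shows "h \<le> norm (quant_act h \<theta> m - quant_act h \<theta> m')"
proof -
  have "m - m' \<noteq> 0" using assms(1) by simp
  from mult_left_mono[OF norm_rvec_ge_1[OF this] assms(2)] show ?thesis
    using assms(2) by (simp add: quant_act_diff)
qed

lemma nonres_set_inner_quant_act_diff_ge:
  assumes I: "I \<in> nonres_set \<omega> \<Delta> \<kappa> D" and \<Delta>: "sigma_approx \<sigma> \<Delta>" and "0 \<le> \<kappa>" "0 < h"
    and y: "\<Delta> 0 \<le> h powr (-1/2)"
    and m: "m \<noteq> m'"
      "norm (quant_act h \<theta> m - quant_act h \<theta> m') \<le> h * approx_inv \<Delta> (h powr (-1/2))"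
  shows "\<kappa> * h powr (3/2) \<le> \<bar>\<omega> I \<bullet> (quant_act h \<theta> m - quant_act h \<theta> m')\<bar>"
proof -
  define y A k where "y = h powr (-1/2)" and "A = approx_inv \<Delta> y" and "k = m - m'"
  have "k \<noteq> 0" using m(1) by (simp add: k_def)
  have diff: "quant_act h \<theta> m - quant_act h \<theta> m' = h *\<^sub>R rvec k"
    by (simp add: k_def quant_act_diff)
  with m(2) \<open>0 < h\<close> have "norm (rvec k) \<le> A" by (simp add: A_def y_def)
  from nonres_set_inner_ge[OF I \<Delta> \<open>k \<noteq> 0\<close> this \<open>0 \<le> \<kappa>\<close>]
  have "\<kappa> / y \<le> \<bar>\<omega> I \<bullet> rvec k\<bar>"
    using sigma_approx_approx_inv[OF \<Delta> y] by (simp add: A_def y_def)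
  then have "h * (\<kappa> / y) \<le> h * \<bar>\<omega> I \<bullet> rvec k\<bar>"
    using \<open>0 < h\<close> by (intro mult_left_mono) auto
  moreover have "h * (\<kappa> / y) = \<kappa> * (h / y)" by simp
  moreover have "h * \<bar>\<omega> I \<bullet> rvec k\<bar> = \<bar>\<omega> I \<bullet> (quant_act h \<theta> m - quant_act h \<theta> m')\<bar>"
    using \<open>0 < h\<close> by (simp add: diff abs_mult)
  ultimately show ?thesis
    by (simp only: y_def powr_three_halves[OF \<open>0 < h\<close>])
qed

lemma expansion_error_le:
  fixes h e d B0 B1 C L A :: real
  assumes "0 < h" "h \<le> e" "e \<le> h * A" "d \<le> (L + 1) * h"
    and "0 \<le> L" "0 \<le> B0" "0 \<le> B1" "0 \<le> C"
    and ratio: "2 * (B0 * (2 + L) + B1 + 2 * C) \<le> \<kappa> * h powr (-1/2) / A\<^sup>2"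
  shows "B0 * (e + d) * e + h * B1 * e + 2 * C * h\<^sup>2 \<le> \<kappa> / 2 * h powr (3/2)"
proof -
  define M where "M = B0 * (2 + L) + B1 + 2 * C"
  have "0 < A" using assms(1-3) by (smt (verit) mult_le_cancel_left1)
  have "B0 * (e + d) * e + h * B1 * e + 2 * C * h\<^sup>2 \<le> M * e\<^sup>2"
    unfolding M_def using assms(1,2,4-8) by (intro expansion_error_le_quadratic) simp_all
  also have "\<dots> \<le> M * (h * A)\<^sup>2"
    using assms(1-3,5-8) by (simp add: M_def mult_left_mono power_mono)
  also have "\<dots> = h\<^sup>2 * (M * A\<^sup>2)" by (simp add: power_mult_distrib)
  also have "\<dots> \<le> h\<^sup>2 * (\<kappa> * h powr (-1/2) / 2)"
    using ratio \<open>0 < A\<close> by (intro mult_left_mono) (simp_all add: M_def pos_le_divide_eq algebra_simps)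
  also have "\<dots> = \<kappa> / 2 * h powr (3/2)"
    by (simp only: powr_three_halves(2)[OF \<open>0 < h\<close>, symmetric]) (simp add: algebra_simps)
  finally show ?thesis .
qed

lemma quasi_eigenvalue_gap:
  fixes F f0 f1 :: "real^'n \<Rightarrow> real" and g0 g1 :: "real^'n \<Rightarrow> real^'n"
  assumes "convex D" and \<Delta>: "sigma_approx \<sigma> \<Delta>" and "0 < \<kappa>" "0 \<le> L" "0 < h"
    and deriv0: "\<And>x. x \<in> D \<Longrightarrow> (f0 has_derivative (\<lambda>v. g0 x \<bullet> v)) (at x)"
    and lip0: "\<And>x y. x \<in> D \<Longrightarrow> y \<in> D \<Longrightarrow> norm (g0 x - g0 y) \<le> B0 * dist x y"
    and deriv1: "\<And>x. x \<in> D \<Longrightarrow> (f1 has_derivative (\<lambda>v. g1 x \<bullet> v)) (at x)"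
    and bound1: "\<And>x. x \<in> D \<Longrightarrow> norm (g1 x) \<le> B1"
    and approx: "\<And>x. x \<in> D \<Longrightarrow> \<bar>F x - (f0 x + h * f1 x)\<bar> \<le> C * h\<^sup>2"
    and "0 \<le> B0" "0 \<le> B1" "0 \<le> C"
    and y: "\<Delta> 0 \<le> h powr (-1/2)"
    and ratio: "2 * (B0 * (2 + L) + B1 + 2 * C)
                  \<le> \<kappa> * h powr (-1/2) / (approx_inv \<Delta> (h powr (-1/2)))\<^sup>2"
    and m: "m \<noteq> m'" "quant_act h \<theta> m \<in> D" "quant_act h \<theta> m' \<in> D"
      "m \<in> Mset (nonres_set g0 \<Delta> \<kappa> D) L h \<theta>"
      "norm (quant_act h \<theta> m - quant_act h \<theta> m') \<le> h * approx_inv \<Delta> (h powr (-1/2))"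
  shows "\<kappa> / 2 * h powr (3/2) \<le> \<bar>F (quant_act h \<theta> m) - F (quant_act h \<theta> m')\<bar>"
proof -
  define a b e where "a = quant_act h \<theta> m" and "b = quant_act h \<theta> m'" and "e = norm (a - b)"
  obtain I where I: "I \<in> nonres_set g0 \<Delta> \<kappa> D" "dist a I < (L + 1) * h"
    using Mset_obtain_near[OF m(4), of "(L + 1) * h"] \<open>0 < h\<close> by (auto simp: a_def algebra_simps)
  then have "I \<in> D" by (simp add: nonres_set_def)
  have "\<kappa> * h powr (3/2) \<le> \<bar>g0 I \<bullet> (a - b)\<bar>"
    unfolding a_def b_def using \<open>0 < \<kappa>\<close> \<open>0 < h\<close>
    by (intro nonres_set_inner_quant_act_diff_ge[OF I(1) \<Delta> _ _ y m(1,5)]) simp_all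
  moreover have "B0 * (e + dist a I) * e + h * B1 * e + 2 * C * h\<^sup>2 \<le> \<kappa> / 2 * h powr (3/2)"
    using quant_act_diff_norm_ge[OF m(1), of h \<theta>] m(5) I(2) assms(3-5) ratio \<open>0 \<le> B0\<close> \<open>0 \<le> B1\<close> \<open>0 \<le> C\<close>
    by (intro expansion_error_le[where A = "approx_inv \<Delta> (h powr (-1/2))"])
       (simp_all add: e_def a_def b_def)
  moreover have "\<bar>g0 I \<bullet> (a - b)\<bar> - B0 * (e + dist a I) * e - h * B1 * e - 2 * C * h\<^sup>2 \<le> \<bar>F a - F b\<bar>"
    unfolding e_def
    using two_term_difference_ge[OF \<open>convex D\<close> m(2,3)[folded a_def b_def] \<open>I \<in> D\<close> deriv0 lip0 deriv1
        bound1 approx _ \<open>0 \<le> B0\<close>] \<open>I \<in> D\<close> \<open>0 < h\<close> by simp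
  ultimately have "\<kappa> / 2 * h powr (3/2) \<le> \<bar>F a - F b\<bar>" by linarith
  then show ?thesis by (simp add: a_def b_def)
qed

lemma uniform_two_term_constants:
  assumes "\<And>j. \<exists>B. \<forall>t\<in>T. \<forall>I\<in>D. \<bar>K j t I\<bar> \<le> B \<and> norm (gradK j t I) \<le> B \<and>
             (\<forall>J\<in>D. norm (gradK j t I - gradK j t J) \<le> B * dist I J)"
    and "\<exists>C h0. 0 < h0 \<and> (\<forall>t\<in>T. \<forall>h\<in>{0<..<h0}. \<forall>I\<in>D.
             \<bar>Kq t h I - (\<Sum>j<2. h ^ j * K j t I)\<bar> \<le> C * h ^ 2)"
  obtains B0 B1 C h0 :: real where "0 \<le> B0" "0 \<le> B1" "0 \<le> C" "0 < h0"
    and "\<And>t I J. t \<in> T \<Longrightarrow> I \<in> D \<Longrightarrow> J \<in> D \<Longrightarrow> norm (gradK 0 t I - gradK 0 t J) \<le> B0 * dist I J"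
    and "\<And>t I. t \<in> T \<Longrightarrow> I \<in> D \<Longrightarrow> norm (gradK 1 t I) \<le> B1"
    and "\<And>t h I. t \<in> T \<Longrightarrow> h \<in> {0<..<h0} \<Longrightarrow> I \<in> D \<Longrightarrow>
           \<bar>Kq t h I - (K 0 t I + h * K 1 t I)\<bar> \<le> C * h\<^sup>2"
proof -
  obtain C h0 where "0 < h0" and C: "\<forall>t\<in>T. \<forall>h\<in>{0<..<h0}. \<forall>I\<in>D.
      \<bar>Kq t h I - (\<Sum>j<2. h ^ j * K j t I)\<bar> \<le> C * h ^ 2"
    using assms(2) by blast
  obtain B0 where B0: "\<forall>t\<in>T. \<forall>I\<in>D. \<forall>J\<in>D. norm (gradK 0 t I - gradK 0 t J) \<le> B0 * dist I J"
    using assms(1)[of 0] by blast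
  obtain B1 where B1: "\<forall>t\<in>T. \<forall>I\<in>D. norm (gradK 1 t I) \<le> B1"
    using assms(1)[of 1] by blast
  show ?thesis
  proof (rule that[of "\<bar>B0\<bar>" "\<bar>B1\<bar>" "\<bar>C\<bar>" h0])
    fix t I J assume "t \<in> T" "I \<in> D" "J \<in> D"
    then have "norm (gradK 0 t I - gradK 0 t J) \<le> B0 * dist I J" using B0 by blast
    also have "\<dots> \<le> \<bar>B0\<bar> * dist I J" by (rule mult_right_mono) auto
    finally show "norm (gradK 0 t I - gradK 0 t J) \<le> \<bar>B0\<bar> * dist I J" .
  next
    fix t I assume "t \<in> T" "I \<in> D"
    then show "norm (gradK 1 t I) \<le> \<bar>B1\<bar>" using B1 abs_ge_self[of B1] by (meson order_trans)
  next
    fix t h I assume "t \<in> T" "h \<in> {0<..<h0}" "I \<in> D"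
    then have "\<bar>Kq t h I - (\<Sum>j<2. h ^ j * K j t I)\<bar> \<le> C * h\<^sup>2" using C by blast
    also have "\<dots> \<le> \<bar>C\<bar> * h\<^sup>2" by (rule mult_right_mono) auto
    finally show "\<bar>Kq t h I - (K 0 t I + h * K 1 t I)\<bar> \<le> \<bar>C\<bar> * h\<^sup>2"
      by (simp add: numeral_2_eq_2)
  qed (use \<open>0 < h0\<close> in auto)
qed

lemma eventually_quasi_eigenvalue_gap:
  fixes Kq :: "real \<Rightarrow> real \<Rightarrow> real^'n \<Rightarrow> real"
  assumes "convex D" "sigma_approx \<sigma> \<Delta>" "0 < \<kappa>" "0 \<le> L"
    and "0 \<le> B0" "0 \<le> B1" "0 \<le> C" "0 < h0"
    and deriv: "\<And>j t I. t \<in> T \<Longrightarrow> I \<in> D \<Longrightarrow> (K j t has_derivative (\<lambda>v. gradK j t I \<bullet> v)) (at I)"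
    and lip0: "\<And>t I J. t \<in> T \<Longrightarrow> I \<in> D \<Longrightarrow> J \<in> D \<Longrightarrow>
                 norm (gradK 0 t I - gradK 0 t J) \<le> B0 * dist I J"
    and bound1: "\<And>t I. t \<in> T \<Longrightarrow> I \<in> D \<Longrightarrow> norm (gradK 1 t I) \<le> B1"
    and approx: "\<And>t h I. t \<in> T \<Longrightarrow> h \<in> {0<..<h0} \<Longrightarrow> I \<in> D \<Longrightarrow>
                   \<bar>Kq t h I - (K 0 t I + h * K 1 t I)\<bar> \<le> C * h\<^sup>2"
    and ratio: "filterlim (\<lambda>h. \<kappa> * h powr (-1/2) / (approx_inv \<Delta> (h powr (-1/2)))\<^sup>2)
                  at_top (at_right 0)"
  shows "\<forall>\<^sub>F h in at_right 0. \<forall>t\<in>T. \<forall>m m'.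
           m \<noteq> m' \<and> quant_act h \<theta> m \<in> D \<and> quant_act h \<theta> m' \<in> D \<and>
           m \<in> Mset (nonres_set (gradK 0 t) \<Delta> \<kappa> D) L h \<theta> \<and>
           norm (quant_act h \<theta> m - quant_act h \<theta> m') \<le> h * approx_inv \<Delta> (h powr (-1/2))
           \<longrightarrow> \<kappa> / 2 * h powr (3/2) \<le> \<bar>Kq t h (quant_act h \<theta> m) - Kq t h (quant_act h \<theta> m')\<bar>"
proof -
  have "filterlim (\<lambda>h::real. h powr (-1/2)) at_top (at_right 0)" by real_asymp
  then have "\<forall>\<^sub>F h in at_right 0. \<Delta> 0 \<le> h powr (-1/2)" by (simp add: filterlim_at_top)
  moreover have "\<forall>\<^sub>F h in at_right 0. 2 * (B0 * (2 + L) + B1 + 2 * C)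
      \<le> \<kappa> * h powr (-1/2) / (approx_inv \<Delta> (h powr (-1/2)))\<^sup>2"
    using ratio by (simp add: filterlim_at_top)
  moreover have "\<forall>\<^sub>F h in at_right 0. h \<in> {0<..<h0}"
    unfolding eventually_at_right_field using \<open>0 < h0\<close> by (intro exI[of _ h0]) auto
  ultimately show ?thesis
  proof eventually_elim
    case (elim h)
    show ?case
    proof (intro ballI allI impI)
      fix t m m' assume "t \<in> T"
      show "\<kappa> / 2 * h powr (3/2) \<le> \<bar>Kq t h (quant_act h \<theta> m) - Kq t h (quant_act h \<theta> m')\<bar>"
        if "m \<noteq> m' \<and> quant_act h \<theta> m \<in> D \<and> quant_act h \<theta> m' \<in> D \<and>
          m \<in> Mset (nonres_set (gradK 0 t) \<Delta> \<kappa> D) L h \<theta> \<and>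
          norm (quant_act h \<theta> m - quant_act h \<theta> m') \<le> h * approx_inv \<Delta> (h powr (-1/2))"
        using that elim assms(1-7) \<open>t \<in> T\<close>
        by (intro quasi_eigenvalue_gap[OF _ _ _ _ _ deriv lip0 deriv bound1 approx]) auto
    qed
  qed
qed

theorem proposition4p1:
  fixes D :: "(real^'n) set"
    and K :: "nat \<Rightarrow> real \<Rightarrow> real^'n \<Rightarrow> real"
    and gradK :: "nat \<Rightarrow> real \<Rightarrow> real^'n \<Rightarrow> real^'n"
    and Kq :: "real \<Rightarrow> real \<Rightarrow> real^'n \<Rightarrow> real"
    and gradKq :: "real \<Rightarrow> real \<Rightarrow> real^'n \<Rightarrow> real^'n"
    and \<Delta> :: "real \<Rightarrow> real"
    and \<sigma> \<kappa> L t0 :: real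
    and \<theta> :: "int^'n"
  assumes D: "open D" "bounded D" "convex D"
    and t0: "t0 > 0" and \<kappa>: "\<kappa> > 0" and L: "L > 0"
    and \<Delta>: "sigma_approx \<sigma> \<Delta>"
    and Kj_deriv: "\<And>j t I. t \<in> {0<..<t0} \<Longrightarrow> I \<in> D \<Longrightarrow>
                     (K j t has_derivative (\<lambda>v. gradK j t I \<bullet> v)) (at I)"
    and Kj_bounds: "\<And>j. \<exists>B. \<forall>t\<in>{0<..<t0}. \<forall>I\<in>D. \<bar>K j t I\<bar> \<le> B \<and> norm (gradK j t I) \<le> B \<and>
                     (\<forall>J\<in>D. norm (gradK j t I - gradK j t J) \<le> B * dist I J)"
    and Kq_deriv: "\<And>t h I. t \<in> {0<..<t0} \<Longrightarrow> h > 0 \<Longrightarrow> I \<in> D \<Longrightarrow>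
                     (Kq t h has_derivative (\<lambda>v. gradKq t h I \<bullet> v)) (at I)"
    and Kq_asymp: "\<And>N. \<exists>C h0. h0 > 0 \<and> (\<forall>t\<in>{0<..<t0}. \<forall>h\<in>{0<..<h0}. \<forall>I\<in>D.
                     \<bar>Kq t h I - (\<Sum>j<N. h ^ j * K j t I)\<bar> \<le> C * h ^ N \<and>
                     norm (gradKq t h I - (\<Sum>j<N. h ^ j *\<^sub>R gradK j t I)) \<le> C * h ^ N)"
    and hyp: "\<And>C1. C1 > 0 \<Longrightarrow>
               filterlim (\<lambda>h. C1 * \<kappa> * h powr (-1/2) / (approx_inv \<Delta> (C1 * h powr (-1/2)))\<^sup>2)
                 at_top (at_right 0)"
  shows "\<exists>C1>0. \<exists>C2>0. \<forall>\<^sub>F h in at_right 0. \<forall>t\<in>{0<..<t0}. \<forall>m m'.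
           m \<noteq> m' \<and> quant_act h \<theta> m \<in> D \<and> quant_act h \<theta> m' \<in> D \<and>
           m \<in> Mset (nonres_set (gradK 0 t) \<Delta> \<kappa> D) L h \<theta> \<and>
           norm (quant_act h \<theta> m - quant_act h \<theta> m') \<le> h * approx_inv \<Delta> (C1 * h powr (-1/2))
           \<longrightarrow> \<bar>Kq t h (quant_act h \<theta> m) - Kq t h (quant_act h \<theta> m')\<bar> \<ge> C2 * h powr (3/2)"
proof -
  have Kq_two_terms: "\<exists>C h0. 0 < h0 \<and> (\<forall>t\<in>{0<..<t0}. \<forall>h\<in>{0<..<h0}. \<forall>I\<in>D.
      \<bar>Kq t h I - (\<Sum>j<2. h ^ j * K j t I)\<bar> \<le> C * h ^ 2)"
    using Kq_asymp[of 2] by blast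
  obtain B0 B1 C h0 where nonneg: "0 \<le> B0" "0 \<le> B1" "0 \<le> C" "0 < h0"
    and lip0: "\<And>t I J. t \<in> {0<..<t0} \<Longrightarrow> I \<in> D \<Longrightarrow> J \<in> D \<Longrightarrow>
           norm (gradK 0 t I - gradK 0 t J) \<le> B0 * dist I J"
    and bound1: "\<And>t I. t \<in> {0<..<t0} \<Longrightarrow> I \<in> D \<Longrightarrow> norm (gradK 1 t I) \<le> B1"
    and approx: "\<And>t h I. t \<in> {0<..<t0} \<Longrightarrow> h \<in> {0<..<h0} \<Longrightarrow> I \<in> D \<Longrightarrow>
           \<bar>Kq t h I - (K 0 t I + h * K 1 t I)\<bar> \<le> C * h\<^sup>2"
    using uniform_two_term_constants[OF Kj_bounds Kq_two_terms] by blast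
  have ratio: "filterlim (\<lambda>h. \<kappa> * h powr (-1/2) / (approx_inv \<Delta> (h powr (-1/2)))\<^sup>2)
      at_top (at_right 0)"
    using hyp[of 1] by simp
  have "\<forall>\<^sub>F h in at_right 0. \<forall>t\<in>{0<..<t0}. \<forall>m m'.
      m \<noteq> m' \<and> quant_act h \<theta> m \<in> D \<and> quant_act h \<theta> m' \<in> D \<and>
      m \<in> Mset (nonres_set (gradK 0 t) \<Delta> \<kappa> D) L h \<theta> \<and>
      norm (quant_act h \<theta> m - quant_act h \<theta> m') \<le> h * approx_inv \<Delta> (h powr (-1/2))
      \<longrightarrow> \<kappa> / 2 * h powr (3/2) \<le> \<bar>Kq t h (quant_act h \<theta> m) - Kq t h (quant_act h \<theta> m')\<bar>"
    by (rule eventually_quasi_eigenvalue_gap[OF D(3) \<Delta> \<kappa> less_imp_le[OF L] nonneg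
          Kj_deriv lip0 bound1 approx ratio])
  then show ?thesis using \<kappa> by (intro exI[of _ 1] exI[of _ "\<kappa> / 2"] conjI) simp_all
qed

end
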